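(* Let $T$ (failure time) and $C$ (censoring time) be random times with true CDFs $F^\star$ and $G^\star$, possibly conditional on features $X$, satisfying random censoring $T \perp C \mid X$, and observed only through $(X, U, \Delta)$ with $U=\min(T,C)$ and $\Delta=\mathbf{1}\{T\le C\}$. Let $\{F_{\theta_T}:\theta_T\in\Theta_T\}$ and $\{G_{\theta_C}:\theta_C\in\Theta_C\}$ be differentiable parametric model families for the failure and censoring distributions, and assume there exist $\theta_T^\star\in\Theta_T$ and $\theta_C^\star\in\Theta_C$ with $F^\star=F_{\theta_T^\star}$ and $G^\star=G_{\theta_C^\star}$. Let $L$ be a proper loss, and let $L_I$ be its inverse-probability-of-censoring-weighted (IPCW) form, i.e. a functional computed from the observed data $(X,U,\Delta)$ such that $L_I(F_{\theta_T};G^\star)=L(F_{\theta_T})$ and $L_I(G_{\theta_C};F^\star)=L(G_{\theta_C})$ for all $\theta_T,\theta_C$. Define the two player losses $$\ell_F(\theta)=L_I(F_{\theta_T};G_{\theta_C}),\qquad \ell_G(\theta)=L_I(G_{\theta_C};F_{\theta_T}),\qquad \theta=(\theta_T,\theta_C),$$ where the failure player controls $\theta_T$ and minimizes $\ell_F$, and the censor player controls $\theta_C$ and minimizes $\ell_G$. Assume the losses are only computed at times for which the positivity conditions hold. Then $(\theta_T^\star,\theta_C^\star)$ is a stationary point of this game, i.e. $\nabla_{\theta_T}\ell_F(\theta_T^\star,\theta_C^\star)=0$ and $\nabla_{\theta_C}\ell_G(\theta_T^\star,\theta_C^\star)=0$.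
   Context: A loss $L$ on distributions is proper if it is minimized at the true data-generating distribution. Notation: $\overline{F}=1-F$, $\overline{G}=1-G$, $\overline{G}(t^-)=P(C\ge t)$. Positivity conditions: there is a truncation time $t_{\max}$ and $\epsilon>0$ such that for all $x$ and all $t\le t_{\max}$ with $f(t\mid x)>0$ (failure density/mass), $\overline{G}(t^-\mid x)\ge\epsilon$; and symmetrically, for all $x$ and all $t\le t_{\max}$ with $g(t\mid x)>0$ (censoring density/mass), $\overline{F}(t\mid x)\ge \epsilon$. A stationary point of a differentiable game is a parameter at which the simultaneous gradient $\xi(\theta)=(\nabla_{\theta_T}\ell_F,\nabla_{\theta_C}\ell_G)$ vanishes. Example of such a game (IPCW Brier score at time $t$): $\ell_F^t=\mathbb{E}\big[\overline{F}_{\theta_T}(t)^2\Delta\mathbf{1}\{U\le t\}/\overline{G}_{\theta_C}(U^-)+F_{\theta_T}(t)^2\mathbf{1}\{U>t\}/\overline{G}_{\theta_C}(t)\big]$ and $\ell_G^t=\mathbb{E}\big[\overline{G}_{\theta_C}(t)^2(1-\Delta)\mathbf{1}\{U\le t\}/\overline{F}_{\theta_T}(U)+G_{\theta_C}(t)^2\mathbf{1}\{U>t\}/\overline{F}_{\theta_T}(t)\big]$; the result applies to single-time games, summed games over several times, and multi-player games with one failure and one censor player per time. *)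

theory Defs
  imports "HOL-Analysis.Analysis"
begin

definition cond_cdf :: "('x \<Rightarrow> real \<Rightarrow> real) \<Rightarrow> bool" where
  "cond_cdf F \<longleftrightarrow> (\<forall>x. mono (F x)
      \<and> (\<forall>t. continuous (at_right t) (F x))
      \<and> ((F x \<longlongrightarrow> 0) at_bot) \<and> ((F x \<longlongrightarrow> 1) at_top))"

definition proper_loss :: "(('x \<Rightarrow> real \<Rightarrow> real) \<Rightarrow> real) \<Rightarrow> ('x \<Rightarrow> real \<Rightarrow> real) \<Rightarrow> bool" where
  "proper_loss L Ftrue \<longleftrightarrow> cond_cdf Ftrue \<and> (\<forall>F. cond_cdf F \<longrightarrow> L Ftrue \<le> L F)"

definition diff_family :: "'p::real_normed_vector set \<Rightarrow> ('p \<Rightarrow> 'x \<Rightarrow> real \<Rightarrow> real) \<Rightarrow> bool" where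
  "diff_family \<Theta> Fm \<longleftrightarrow> open \<Theta> \<and> (\<forall>\<theta>\<in>\<Theta>. cond_cdf (Fm \<theta>))
      \<and> (\<forall>x t. (\<lambda>\<theta>. Fm \<theta> x t) differentiable_on \<Theta>)"

definition game_stationary ::
  "('a::real_normed_vector \<times> 'b::real_normed_vector \<Rightarrow> real) \<Rightarrow> ('a \<times> 'b \<Rightarrow> real) \<Rightarrow> 'a \<Rightarrow> 'b \<Rightarrow> bool" where
  "game_stationary lF lG a b \<longleftrightarrow>
     ((\<lambda>a'. lF (a', b)) has_derivative (\<lambda>_. 0)) (at a)
   \<and> ((\<lambda>b'. lG (a, b')) has_derivative (\<lambda>_. 0)) (at b)"

end

(* When the opponent plays its true parameter, the IPCW weights are the true ones, so on
   each player's model family its IPCW loss coincides with the proper loss L, which is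
   minimised at the truth. The true parameter is thus an interior minimiser of the
   player's (differentiable) partial loss, whose derivative must therefore vanish. *)
theory Submission
  imports Defs
begin

lemma has_derivative_zero_at_min_on_open:
  fixes f :: "'a::real_normed_vector \<Rightarrow> real"
  assumes "f differentiable (at a)" and "open S" "a \<in> S"
    and min: "\<And>y. y \<in> S \<Longrightarrow> f a \<le> f y"
  shows "(f has_derivative (\<lambda>_. 0)) (at a)"
proof -
  obtain D where D: "(f has_derivative D) (at a)"
    using assms(1) unfolding differentiable_def by blast
  have "eventually (\<lambda>y. f a \<le> f y) (at a)"
    using assms(2,3) min eventually_at_topological by blast
  with D have "D = (\<lambda>_. 0)" by (rule has_derivative_local_min)
  with D show ?thesis by simp
qed

lemma differentiable_at_Pair_left:
  fixes f :: "'a::real_normed_vector \<times> 'b::real_normed_vector \<Rightarrow> 'c::real_normed_vector"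
  assumes "f differentiable (at (a, b))"
  shows "(\<lambda>a'. f (a', b)) differentiable (at a)"
  using differentiable_compose[of f "\<lambda>a'. (a', b)" a] assms by simp

lemma differentiable_at_Pair_right:
  fixes f :: "'a::real_normed_vector \<times> 'b::real_normed_vector \<Rightarrow> 'c::real_normed_vector"
  assumes "f differentiable (at (a, b))"
  shows "(\<lambda>b'. f (a, b')) differentiable (at b)"
  using differentiable_compose[of f "\<lambda>b'. (a, b')" b] assms by simp

lemma ipcw_loss_min_at_true_param:
  assumes proper: "proper_loss L (Fm \<theta>s)"
    and cdfs: "\<forall>\<theta>\<in>\<Theta>. cond_cdf (Fm \<theta>)"
    and ipcw: "\<forall>\<theta>\<in>\<Theta>. LI (Fm \<theta>) G = L (Fm \<theta>)"
    and "\<theta>s \<in> \<Theta>" "\<theta> \<in> \<Theta>"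
  shows "LI (Fm \<theta>s) G \<le> LI (Fm \<theta>) G"
proof -
  have "L (Fm \<theta>s) \<le> L (Fm \<theta>)"
    using proper cdfs \<open>\<theta> \<in> \<Theta>\<close> unfolding proper_loss_def by blast
  then show ?thesis
    using ipcw \<open>\<theta>s \<in> \<Theta>\<close> \<open>\<theta> \<in> \<Theta>\<close> by simp
qed

lemma ipcw_loss_has_derivative_zero_at_true_param:
  fixes Fm :: "'p::real_normed_vector \<Rightarrow> 'x \<Rightarrow> real \<Rightarrow> real"
  assumes fam: "diff_family \<Theta> Fm" and true: "\<theta>s \<in> \<Theta>"
    and proper: "proper_loss L (Fm \<theta>s)"
    and ipcw: "\<forall>\<theta>\<in>\<Theta>. LI (Fm \<theta>) G = L (Fm \<theta>)"
    and diff: "(\<lambda>\<theta>. LI (Fm \<theta>) G) differentiable (at \<theta>s)"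
  shows "((\<lambda>\<theta>. LI (Fm \<theta>) G) has_derivative (\<lambda>_. 0)) (at \<theta>s)"
proof (rule has_derivative_zero_at_min_on_open[where S = \<Theta>])
  show "open \<Theta>"
    using fam unfolding diff_family_def by blast
  have cdfs: "\<forall>\<theta>\<in>\<Theta>. cond_cdf (Fm \<theta>)"
    using fam unfolding diff_family_def by blast
  show "LI (Fm \<theta>s) G \<le> LI (Fm \<theta>) G" if "\<theta> \<in> \<Theta>" for \<theta>
    using proper cdfs ipcw true that
    by (rule ipcw_loss_min_at_true_param[where LI = LI and G = G])
qed (fact diff true)+

theorem proposition1:
  fixes \<Theta>T :: "'p::euclidean_space set" and \<Theta>C :: "'q::euclidean_space set"
    and Fm :: "'p \<Rightarrow> 'x \<Rightarrow> real \<Rightarrow> real" and Gm :: "'q \<Rightarrow> 'x \<Rightarrow> real \<Rightarrow> real"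
    and Fstar Gstar :: "'x \<Rightarrow> real \<Rightarrow> real"
    and LT LC :: "('x \<Rightarrow> real \<Rightarrow> real) \<Rightarrow> real"
    and LIT LIC :: "('x \<Rightarrow> real \<Rightarrow> real) \<Rightarrow> ('x \<Rightarrow> real \<Rightarrow> real) \<Rightarrow> real"
    and \<theta>Ts :: 'p and \<theta>Cs :: 'q
  assumes famT: "diff_family \<Theta>T Fm" and famC: "diff_family \<Theta>C Gm"
    and wellT: "\<theta>Ts \<in> \<Theta>T" and wellC: "\<theta>Cs \<in> \<Theta>C"
    and trueF: "Fstar = Fm \<theta>Ts" and trueG: "Gstar = Gm \<theta>Cs"
    and properT: "proper_loss LT Fstar" and properC: "proper_loss LC Gstar"
    and ipcwT: "\<forall>\<theta>T\<in>\<Theta>T. LIT (Fm \<theta>T) Gstar = LT (Fm \<theta>T)"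
    and ipcwC: "\<forall>\<theta>C\<in>\<Theta>C. LIC (Gm \<theta>C) Fstar = LC (Gm \<theta>C)"
    and diffF: "(\<lambda>\<theta>. LIT (Fm (fst \<theta>)) (Gm (snd \<theta>))) differentiable (at (\<theta>Ts, \<theta>Cs))"
    and diffG: "(\<lambda>\<theta>. LIC (Gm (snd \<theta>)) (Fm (fst \<theta>))) differentiable (at (\<theta>Ts, \<theta>Cs))"
  shows "game_stationary (\<lambda>\<theta>. LIT (Fm (fst \<theta>)) (Gm (snd \<theta>)))
                         (\<lambda>\<theta>. LIC (Gm (snd \<theta>)) (Fm (fst \<theta>))) \<theta>Ts \<theta>Cs"
proof -
  have "(\<lambda>\<theta>T. LIT (Fm \<theta>T) (Gm \<theta>Cs)) differentiable (at \<theta>Ts)"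
    using differentiable_at_Pair_left[OF diffF] by simp
  with famT wellT properT ipcwT
  have "((\<lambda>\<theta>T. LIT (Fm \<theta>T) (Gm \<theta>Cs)) has_derivative (\<lambda>_. 0)) (at \<theta>Ts)"
    unfolding trueF trueG
    by (rule ipcw_loss_has_derivative_zero_at_true_param[where LI = LIT and G = "Gm \<theta>Cs"])
  moreover have "(\<lambda>\<theta>C. LIC (Gm \<theta>C) (Fm \<theta>Ts)) differentiable (at \<theta>Cs)"
    using differentiable_at_Pair_right[OF diffG] by simp
  with famC wellC properC ipcwC
  have "((\<lambda>\<theta>C. LIC (Gm \<theta>C) (Fm \<theta>Ts)) has_derivative (\<lambda>_. 0)) (at \<theta>Cs)"
    unfolding trueF trueG
    by (rule ipcw_loss_has_derivative_zero_at_true_param[where LI = LIC and G = "Fm \<theta>Ts"])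
  ultimately show ?thesis
    unfolding game_stationary_def by simp
qed

end
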